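(* Let $\pi$ be a prior on $(P,\theta)\in\mathcal P\times\mathbb R^p$ satisfying the following two conditions. (MD) The conditional prior of $(Y(P),\theta)$ given $(X(P),W(P))$ is absolutely continuous with full support and a continuous density for all values of $(X(P),W(P))$; and for all $P\in\mathcal P$ and $\theta\in\mathbb R^p$, $\pi(\theta\mid P)=h(Q_W(\theta;P),W(P),\theta)\,c(P)$ for some non-negative function $h$ that is twice continuously differentiable in its first argument and continuously differentiable in $\theta$, with $c(P)$ the normalizing constant making $\int\pi(\theta\mid P)\,d\theta=1$. (MZ) Writing $\pi_\eta(\eta\mid\theta)=\pi(\eta\mid\theta,W(P),X(P))$ for the conditional prior density of $\eta=g(\theta;P)$: (i) $\pi_\eta(\eta\mid\theta)$ is strictly positive and twice continuously differentiable in $\eta$ and $\theta$; (ii) it does not depend on $X(P)$, i.e. $\pi(\eta\mid\theta,W(P),X(P))=\pi(\eta\mid\theta,W(P))$ for all $X(P)$; (iii) $\int\eta\,\pi_\eta(\eta\mid\theta)\,d\eta=0$. Moreover, $\mathcal P$ is rich enough that $(Y(P),X(P))$ can be varied freely while holding $W(P)$ fixed. Then the conditional prior density of $\eta$ is rotationally invariant with respect to $W(P)$: there is a function $f$ such that \[ \pi_\eta(\eta\mid\theta)=f\bigl(\eta'W(P)\eta\mid\theta,W(P)\bigr). \]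
   Context: Let $\mathcal D$ be a set and $\mathcal P$ a set of probability distributions on $\mathcal D$; the distribution $P\in\mathcal P$ is observed. Fix integers $k>p\ge1$. Let $Y:\mathcal P\to\mathbb R^k$ and $X:\mathcal P\to\mathbb R^{k\times p}$ be known functions with $X(P)$ of full column rank for every $P$, and let $W(P)$ be a known symmetric positive definite $k\times k$ matrix depending on $P$. For $\theta\in\mathbb R^p$ define $g(\theta;P)=Y(P)-X(P)\theta$ and $Q_W(\theta;P)=g(\theta;P)'W(P)g(\theta;P)$. A prior $\pi$ is a joint distribution over pairs $(P,\theta)$; for the pair drawn, the misspecification parameter is $\eta=g(\theta;P)=Y(P)-X(P)\theta\in\mathbb R^k$. $\pi(\theta\mid P)$ denotes the posterior density of $\theta$ given $P$. *)

theory Defs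
  imports "HOL-Analysis.Analysis"
begin

definition C1_UNIV :: "('a::real_normed_vector \<Rightarrow> 'b::real_normed_vector) \<Rightarrow> bool" where
  "C1_UNIV f \<longleftrightarrow> (\<exists>f'. (\<forall>x. (f has_derivative blinfun_apply (f' x)) (at x)) \<and> continuous_on UNIV f')"

definition C2_UNIV :: "('a::real_normed_vector \<Rightarrow> 'b::real_normed_vector) \<Rightarrow> bool" where
  "C2_UNIV f \<longleftrightarrow> (\<exists>f'. (\<forall>x. (f has_derivative blinfun_apply (f' x)) (at x)) \<and> C1_UNIV f')"

definition spd :: "real^'k^'k \<Rightarrow> bool" where
  "spd W \<longleftrightarrow> transpose W = W \<and> (\<forall>v. v \<noteq> 0 \<longrightarrow> v \<bullet> (W *v v) > 0)"

definition full_col_rank :: "real^'p^'k \<Rightarrow> bool" where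
  "full_col_rank X \<longleftrightarrow> rank X = CARD('p)"

definition gmom :: "real^'k \<Rightarrow> real^'p^'k \<Rightarrow> real^'p \<Rightarrow> real^'k" where
  "gmom Y X \<theta> = Y - X *v \<theta>"

definition QW :: "real^'k^'k \<Rightarrow> real^'k \<Rightarrow> real^'p^'k \<Rightarrow> real^'p \<Rightarrow> real" where
  "QW W Y X \<theta> = gmom Y X \<theta> \<bullet> (W *v gmom Y X \<theta>)"

text \<open>The prior is described by dens W X Y theta, the conditional density (w.r.t. Lebesgue
  measure) of (Y(P),theta) given (X(P),W(P)) = (X,W).  Derived objects:\<close>

definition prior_theta :: "(real^'k^'k \<Rightarrow> real^'p^'k \<Rightarrow> real^'k \<Rightarrow> real^'p \<Rightarrow> real)
    \<Rightarrow> real^'k^'k \<Rightarrow> real^'p^'k \<Rightarrow> real^'p \<Rightarrow> real" where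
  "prior_theta dens W X \<theta> = (\<integral>Y. dens W X Y \<theta> \<partial>lborel)"

text \<open>conditional prior density of eta = Y - X theta given (theta, W, X)
  (the change of variables Y \<mapsto> eta has unit Jacobian)\<close>
definition prior_eta :: "(real^'k^'k \<Rightarrow> real^'p^'k \<Rightarrow> real^'k \<Rightarrow> real^'p \<Rightarrow> real)
    \<Rightarrow> real^'k^'k \<Rightarrow> real^'p^'k \<Rightarrow> real^'p \<Rightarrow> real^'k \<Rightarrow> real" where
  "prior_eta dens W X \<theta> \<eta> = dens W X (\<eta> + X *v \<theta>) \<theta> / prior_theta dens W X \<theta>"

definition posterior :: "(real^'k^'k \<Rightarrow> real^'p^'k \<Rightarrow> real^'k \<Rightarrow> real^'p \<Rightarrow> real)
    \<Rightarrow> real^'k^'k \<Rightarrow> real^'p^'k \<Rightarrow> real^'k \<Rightarrow> real^'p \<Rightarrow> real" where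
  "posterior dens W X Y \<theta> = dens W X Y \<theta> / (\<integral>t. dens W X Y t \<partial>lborel)"

end

theory Submission
  imports Defs
begin

text \<open>Writing the joint density of (Y, \<theta>) given (X, W) once through the prior of \<eta> and once
  through the posterior shape from (MD), the quotient G \<theta> \<eta> of the density of \<eta> by
  h(\<eta>'W\<eta>, W, \<theta>) satisfies G \<theta> (Y - X\<theta>) \<pi>(\<theta>) = K(X, Y).  Because X ranges over all
  matrices of full column rank, X a can be any nonzero vector; shifting \<theta> by a then shows that
  G \<theta> (\<eta> + d) / G \<theta> \<eta> does not depend on \<eta>, so G \<theta> is a positive continuous
  multiplicative function, i.e. G \<theta> \<eta> = G \<theta> 0 exp (L \<eta>) with L linear.  Applying L to the
  mean-zero condition and symmetrising with \<eta> \<mapsto> -\<eta> (under which \<eta>'W\<eta> is invariant) gives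
  \<integral> h (exp (L \<eta>) - exp (- L \<eta>)) L \<eta> = 0 with a continuous nonnegative integrand, so L = 0.\<close>

lemma exists_full_col_rank_map:
  fixes \<delta> :: "real^'p::finite" and u :: "real^'k::finite"
  assumes "CARD('p) \<le> CARD('k)" and "\<delta> \<noteq> 0" and "u \<noteq> 0"
  obtains X :: "real^'p^'k" where "full_col_rank X" and "X *v \<delta> = u"
proof -
  obtain f :: "real^'p \<Rightarrow> real^'k" where f: "linear f" "\<And>x. norm (f x) = norm x"
    using isometry_subset_subspace[of "UNIV :: (real^'p) set" "UNIV :: (real^'k) set"] assms(1)
    by auto
  define s where "s = norm u / norm \<delta>"
  have s: "s > 0" using assms by (simp add: s_def)
  have "norm (s *\<^sub>R f \<delta>) = norm u" using assms by (simp add: f(2) s_def)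
  then obtain g where g: "orthogonal_transformation g" "g (s *\<^sub>R f \<delta>) = u"
    by (rule orthogonal_transformation_exists)
  define F where "F x = g (s *\<^sub>R f x)" for x
  have lin: "linear F"
    unfolding F_def using g(1) f(1)
    by (intro linear_compose[unfolded o_def, OF _ orthogonal_transformation_linear[OF g(1)]] linear_compose_scale_right)
  have norm_F: "norm (F x) = s * norm x" for x
    using s by (simp add: F_def orthogonal_transformation_norm[OF g(1)] f(2))
  have "inj F"
  proof (rule injI)
    fix x y assume "F x = F y"
    then have "norm (F (x - y)) = 0" using lin by (simp add: linear_diff)
    then show "x = y" using s by (simp add: norm_F)
  qed
  then have "full_col_rank (matrix F)"
    unfolding full_col_rank_def full_rank_injective matrix_vector_mul(2)[OF lin] .
  moreover have "matrix F *v \<delta> = u"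
    using fun_cong[OF matrix_vector_mul(2)[OF lin], of \<delta>] by (simp add: F_def g(2))
  ultimately show ?thesis by (rule that)
qed

lemma has_bochner_integral_lborel_reflect:
  fixes f :: "'a::euclidean_space \<Rightarrow> 'b::{banach,second_countable_topology}"
  assumes "has_bochner_integral lborel f I"
  shows "has_bochner_integral lborel (\<lambda>x. f (- x)) I"
proof -
  have distr_uminus: "distr lborel borel uminus = (lborel :: 'a measure)"
    using lborel_affine[of "-1::real" "0::'a"] by (simp add: density_1)
  have "f \<in> borel_measurable lborel"
    using assms has_bochner_integral_iff borel_measurable_integrable by blast
  then have [measurable]: "f \<in> borel_measurable borel" by simp
  have "has_bochner_integral (distr lborel borel uminus) f I"
    using assms distr_uminus by simp
  then show ?thesis
    by (simp add: has_bochner_integral_iff integrable_distr_eq integral_distr)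
qed

lemma continuous_additive_imp_linear:
  fixes L :: "'a::real_normed_vector \<Rightarrow> real"
  assumes add: "\<And>x y. L (x + y) = L x + L y" and cont: "continuous_on UNIV L"
  shows "linear L"
proof -
  have L_0: "L 0 = 0" using add[of 0 0] by simp
  have L_minus: "L (- x) = - L x" for x using add[of x "- x"] L_0 by simp
  have L_of_nat: "L (of_nat n *\<^sub>R x) = of_nat n * L x" for n x
    by (induction n) (auto simp: L_0 add scaleR_add_left algebra_simps)
  have L_of_int: "L (of_int n *\<^sub>R x) = of_int n * L x" for n x
    by (cases n rule: int_cases) (simp_all add: L_of_nat L_minus del: of_nat_Suc)
  have L_rat: "L (r *\<^sub>R x) = r * L x" if r: "r \<in> \<rat>" for r x
  proof -
    obtain a b where ab: "b > 0" "r = of_int a / of_int b"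
      using Rats_cases'[OF r] by metis
    have "of_int b * L (r *\<^sub>R x) = L ((of_int b * r) *\<^sub>R x)"
      using L_of_int[of b "r *\<^sub>R x"] by simp
    also have "of_int b * r = of_int a" using ab by simp
    finally have "of_int b * L (r *\<^sub>R x) = of_int b * (r * L x)" using ab L_of_int by simp
    then show ?thesis using ab(1) by simp
  qed
  have L_scale: "L (t *\<^sub>R x) = t * L x" for t x
  proof -
    have "continuous_on UNIV (\<lambda>t. L (t *\<^sub>R x) - t * L x)"
      by (intro continuous_intros continuous_on_compose2[OF cont]) auto
    then show ?thesis
      using continuous_constant_on_closure[of "\<rat>" "\<lambda>t. L (t *\<^sub>R x) - t * L x" 0 t]
        Rats_closure_real L_rat by auto
  qed
  show ?thesis by (rule linearI) (simp_all add: add L_scale)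
qed

lemma positive_multiplicative_imp_exp_linear:
  fixes G :: "'a::real_normed_vector \<Rightarrow> real"
  assumes pos: "\<And>x. G x > 0" and cont: "continuous_on UNIV G"
    and mult: "\<And>x y. G (x + y) * G 0 = G x * G y"
  obtains L where "linear L" and "\<And>x. G x = G 0 * exp (L x)"
proof
  define L where "L x = ln (G x / G 0)" for x
  have "L (x + y) = L x + L y" for x y
  proof -
    have "G (x + y) / G 0 = G x / G 0 * (G y / G 0)"
      using mult[of x y] pos[of 0] by (simp add: field_simps)
    then show ?thesis
      unfolding L_def using ln_mult[of "G x / G 0" "G y / G 0"] pos[of x] pos[of y] pos[of 0] by simp
  qed
  moreover have "continuous_on UNIV L"
    unfolding L_def[abs_def] using pos
    by (intro continuous_intros cont) (auto simp: less_imp_neq[symmetric])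
  ultimately show "linear L" by (rule continuous_additive_imp_linear)
  show "G x = G 0 * exp (L x)" for x using pos[of x] pos[of 0] by (simp add: L_def)
qed

lemma continuous_nonneg_integral_zero_imp_zero:
  fixes F :: "'a::euclidean_space \<Rightarrow> real"
  assumes "has_bochner_integral lborel F 0" and "\<And>x. F x \<ge> 0" and "continuous_on UNIV F"
  shows "F x = 0"
proof -
  have "AE x in lborel. F x = 0"
    using assms(1,2) integral_nonneg_eq_0_iff_AE[of lborel F] by (simp add: has_bochner_integral_iff)
  then have "AE x in lebesgue. x \<in> {x. F x = 0}" by (simp add: AE_completion)
  moreover have "closed {x. F x = 0}"
    using continuous_closed_preimage_constant[OF assms(3) closed_UNIV] by simp
  ultimately show ?thesis using mem_closed_if_AE_lebesgue_open[of UNIV "{x. F x = 0}" x] by simp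
qed

lemma linear_zero_if_centered_exp_tilt:
  fixes s :: "'a::euclidean_space \<Rightarrow> real" and L :: "'a \<Rightarrow> real"
  assumes lin: "linear L"
    and s_even: "\<And>x. s (- x) = s x" and s_pos: "\<And>x. s x > 0" and s_cont: "continuous_on UNIV s"
    and centered: "has_bochner_integral lborel (\<lambda>x. (s x * exp (L x)) *\<^sub>R x) 0"
  shows "L x = 0"
proof -
  \<comment> \<open>Symmetrising the centred first moment of L under x \<mapsto> -x gives a nonnegative integrand.\<close>
  define F where "F x = s x * ((exp (L x) - exp (- L x)) * L x)" for x
  have L_minus: "L (- x) = - L x" for x using linear_neg[OF lin] .
  have bl: "bounded_linear L" using lin linear_conv_bounded_linear by blast
  have "has_bochner_integral lborel (\<lambda>x. L ((s x * exp (L x)) *\<^sub>R x)) (L 0)"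
    by (rule has_bochner_integral_bounded_linear[OF bl centered])
  then have I: "has_bochner_integral lborel (\<lambda>x. s x * exp (L x) * L x) 0"
    using lin by (simp add: linear_0 linear_scale)
  have "has_bochner_integral lborel F 0"
    using has_bochner_integral_add[OF I has_bochner_integral_lborel_reflect[OF I]]
    by (simp add: F_def[abs_def] L_minus s_even algebra_simps)
  moreover have "F x \<ge> 0" for x
  proof -
    have "0 \<le> (exp t - exp (- t)) * t" for t :: real by (auto simp: zero_le_mult_iff)
    then show ?thesis using s_pos[of x] by (simp add: F_def)
  qed
  moreover have "continuous_on UNIV F"
    unfolding F_def[abs_def] by (intro continuous_intros s_cont linear_continuous_on[OF bl])
  ultimately have "F x = 0" by (rule continuous_nonneg_integral_zero_imp_zero)
  then show ?thesis using s_pos[of x] by (simp add: F_def)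
qed

lemma shift_invariant_imp_multiplicative:
  fixes G :: "real^'p::finite \<Rightarrow> real^'k::finite \<Rightarrow> real"
    and m :: "real^'p^'k \<Rightarrow> real^'p \<Rightarrow> real"
    and K :: "real^'p^'k \<Rightarrow> real^'k \<Rightarrow> real"
  assumes kp: "CARD('p) \<le> CARD('k)"
    and G_nz: "\<And>\<theta> \<eta>. G \<theta> \<eta> \<noteq> 0"
    and m_nz: "\<And>X \<theta>. full_col_rank X \<Longrightarrow> m X \<theta> \<noteq> 0"
    and shift: "\<And>X \<theta> Y. full_col_rank X \<Longrightarrow> G \<theta> (Y - X *v \<theta>) * m X \<theta> = K X Y"
  shows "G \<theta> (x + y) * G \<theta> 0 = G \<theta> x * G \<theta> y"
proof -
  obtain a :: "real^'p" where a: "a \<noteq> 0" using one_neq_zero by blast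
  have ratio: "G \<theta> (\<eta> + d) / G \<theta> \<eta> = G (\<theta> + a) (w + d) / G (\<theta> + a) w"
    if "w \<noteq> \<eta>" for \<eta> w d
  proof -
    obtain X where X: "full_col_rank X" "X *v a = \<eta> - w"
      using exists_full_col_rank_map[OF kp a] \<open>w \<noteq> \<eta>\<close> by (metis right_minus_eq)
    \<comment> \<open>Moving \<theta> to \<theta> + a while keeping Y and X fixed moves \<eta> to \<eta> - X *v a.\<close>
    have move: "G \<theta> v * m X \<theta> = G (\<theta> + a) (v - (\<eta> - w)) * m X (\<theta> + a)" for v
      using shift[OF X(1), of \<theta> "v + X *v \<theta>"] shift[OF X(1), of "\<theta> + a" "v + X *v \<theta>"] X(2)
      by (simp add: matrix_vector_right_distrib algebra_simps)
    have "G \<theta> (\<eta> + d) / G \<theta> \<eta> = (G \<theta> (\<eta> + d) * m X \<theta>) / (G \<theta> \<eta> * m X \<theta>)"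
      using m_nz[OF X(1)] by simp
    also have "\<dots> = (G (\<theta> + a) (w + d) * m X (\<theta> + a)) / (G (\<theta> + a) w * m X (\<theta> + a))"
      using move[of \<eta>] move[of "\<eta> + d"] by (simp add: add.commute)
    also have "\<dots> = G (\<theta> + a) (w + d) / G (\<theta> + a) w"
      using m_nz[OF X(1)] by simp
    finally show ?thesis .
  qed
  have "G \<theta> (\<eta> + d) / G \<theta> \<eta> = G \<theta> (\<eta>' + d) / G \<theta> \<eta>'" for \<eta> \<eta>' d
  proof -
    have "infinite (UNIV :: (real^'k) set)" by (rule infinite_UNIV_vec[OF infinite_UNIV_char_0])
    then obtain w where "w \<notin> {\<eta>, \<eta>'}" by (meson ex_new_if_finite finite.emptyI finite.insertI)
    then show ?thesis using ratio[of w \<eta> d] ratio[of w \<eta>' d] by simp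
  qed
  then have "G \<theta> x / G \<theta> 0 = G \<theta> (x + y) / G \<theta> y"
    by (metis add.commute add_0)
  then show ?thesis using G_nz[of \<theta> 0] G_nz[of \<theta> y] by (simp add: frac_eq_eq)
qed

lemma C2_UNIV_imp_continuous_on:
  assumes "C2_UNIV f"
  shows "continuous_on UNIV f"
proof -
  obtain f' where "\<And>x. (f has_derivative blinfun_apply (f' x)) (at x)"
    using assms unfolding C2_UNIV_def by blast
  then show ?thesis by (intro has_derivative_continuous_on) auto
qed

lemma density_proportional_to_kernel:
  fixes e s :: "real^'p::finite \<Rightarrow> real^'k::finite \<Rightarrow> real"
    and m :: "real^'p^'k \<Rightarrow> real^'p \<Rightarrow> real"
    and K :: "real^'p^'k \<Rightarrow> real^'k \<Rightarrow> real"
  assumes kp: "CARD('p) \<le> CARD('k)"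
    and e_pos: "\<And>\<theta> \<eta>. e \<theta> \<eta> > 0" and e_cont: "\<And>\<theta>. continuous_on UNIV (e \<theta>)"
    and s_nonneg: "\<And>\<theta> \<eta>. s \<theta> \<eta> \<ge> 0" and s_even: "\<And>\<theta> \<eta>. s \<theta> (- \<eta>) = s \<theta> \<eta>"
    and s_cont: "\<And>\<theta>. continuous_on UNIV (s \<theta>)"
    and m_nz: "\<And>X \<theta>. full_col_rank X \<Longrightarrow> m X \<theta> \<noteq> 0"
    and factor: "\<And>X \<theta> Y. full_col_rank X \<Longrightarrow>
      e \<theta> (Y - X *v \<theta>) * m X \<theta> = s \<theta> (Y - X *v \<theta>) * K X Y"
    and centered: "\<And>\<theta>. has_bochner_integral lborel (\<lambda>\<eta>. e \<theta> \<eta> *\<^sub>R \<eta>) 0"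
  shows "e \<theta> \<eta> = e \<theta> 0 / s \<theta> 0 * s \<theta> \<eta>"
proof -
  obtain X0 :: "real^'p^'k" where X0: "full_col_rank X0"
    using exists_full_col_rank_map[OF kp, of 1 1] by auto
  have s_pos: "s \<theta> \<eta> > 0" for \<theta> \<eta>
  proof -
    have "e \<theta> \<eta> * m X0 \<theta> \<noteq> 0" using e_pos[of \<theta> \<eta>] m_nz[OF X0, of \<theta>] by simp
    then have "s \<theta> \<eta> \<noteq> 0" using factor[OF X0, of \<theta> "\<eta> + X0 *v \<theta>"] by auto
    then show ?thesis using s_nonneg[of \<theta> \<eta>] by (simp add: less_le)
  qed
  define G where "G \<theta> \<eta> = e \<theta> \<eta> / s \<theta> \<eta>" for \<theta> \<eta>
  have G_pos: "G \<theta> \<eta> > 0" for \<theta> \<eta> using e_pos s_pos by (simp add: G_def)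
  have G_cont: "continuous_on UNIV (G \<theta>)"
    unfolding G_def[abs_def] using s_pos
    by (intro continuous_intros e_cont s_cont) (auto simp: less_imp_neq[symmetric])
  have "G \<theta> (x + y) * G \<theta> 0 = G \<theta> x * G \<theta> y" for x y
  proof (rule shift_invariant_imp_multiplicative[OF kp _ m_nz])
    show "G \<theta> \<eta> \<noteq> 0" for \<theta> \<eta> using G_pos[of \<theta> \<eta>] by simp
    show "G \<theta> (Y - X *v \<theta>) * m X \<theta> = K X Y" if "full_col_rank X" for X \<theta> Y
      using factor[OF that, of \<theta> Y] s_pos[of \<theta> "Y - X *v \<theta>"] by (simp add: G_def field_simps)
  qed
  then obtain L where L: "linear L" "\<And>\<eta>. G \<theta> \<eta> = G \<theta> 0 * exp (L \<eta>)"
    using positive_multiplicative_imp_exp_linear[of "G \<theta>"] G_pos G_cont by blast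
  have e_tilt: "e \<theta> \<eta> = G \<theta> 0 * s \<theta> \<eta> * exp (L \<eta>)" for \<eta>
    using L(2)[of \<eta>] s_pos[of \<theta> \<eta>] by (simp add: G_def field_simps)
  have "L \<eta> = 0"
  proof (rule linear_zero_if_centered_exp_tilt[OF L(1)])
    show "has_bochner_integral lborel (\<lambda>\<eta>. (G \<theta> 0 * s \<theta> \<eta> * exp (L \<eta>)) *\<^sub>R \<eta>) 0"
      using centered[of \<theta>] by (simp add: e_tilt)
  qed (use G_pos s_pos s_even s_cont in \<open>auto intro: continuous_intros\<close>)
  then show ?thesis using e_tilt[of \<eta>] e_tilt[of 0] s_pos[of \<theta> 0] linear_0[OF L(1)] by simp
qed

lemma prior_eta_mult_prior_theta_eq_kernel:
  fixes dens :: "real^'k::finite^'k \<Rightarrow> real^'p::finite^'k \<Rightarrow> real^'k \<Rightarrow> real^'p \<Rightarrow> real"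
  assumes prior_eta_nz: "prior_eta dens W X \<theta> (Y - X *v \<theta>) \<noteq> 0"
    and post_int: "has_bochner_integral lborel (\<lambda>\<theta>. h (QW W Y X \<theta>) \<theta> * c) 1"
    and post: "\<And>\<theta>. posterior dens W X Y \<theta> = h (QW W Y X \<theta>) \<theta> * c"
  shows "prior_eta dens W X \<theta> (Y - X *v \<theta>) * prior_theta dens W X \<theta>
    = h ((Y - X *v \<theta>) \<bullet> (W *v (Y - X *v \<theta>))) \<theta> * (c * (\<integral>t. dens W X Y t \<partial>lborel))"
proof -
  have "(\<integral>t. dens W X Y t \<partial>lborel) \<noteq> 0"
  proof
    assume "(\<integral>t. dens W X Y t \<partial>lborel) = 0"
    then have "(\<lambda>\<theta>. h (QW W Y X \<theta>) \<theta> * c) = (\<lambda>_. 0)"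
      by (simp add: post[symmetric] posterior_def)
    with post_int have "has_bochner_integral lborel (\<lambda>_ :: real^'p. 0 :: real) 1" by simp
    then show False by (simp add: has_bochner_integral_iff)
  qed
  then have "dens W X Y \<theta> = h (QW W Y X \<theta>) \<theta> * (c * (\<integral>t. dens W X Y t \<partial>lborel))"
    using post[of \<theta>] by (simp add: posterior_def field_simps)
  then show ?thesis using prior_eta_nz by (simp add: prior_eta_def QW_def gmom_def)
qed

lemma prior_eta_proportional_to_kernel:
  fixes W :: "real^'k::finite^'k" and X0 :: "real^'p::finite^'k"
    and h :: "real \<Rightarrow> real^'p \<Rightarrow> real" and c :: "real^'p^'k \<Rightarrow> real^'k \<Rightarrow> real"
  assumes kp: "CARD('p) \<le> CARD('k)" and X0: "full_col_rank X0"
    and h_nonneg: "\<And>q \<theta>. h q \<theta> \<ge> 0" and h_cont: "\<And>\<theta>. continuous_on UNIV (\<lambda>q. h q \<theta>)"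
    and post: "\<And>X Y. full_col_rank X \<Longrightarrow>
        has_bochner_integral lborel (\<lambda>\<theta>. h (QW W Y X \<theta>) \<theta> * c X Y) 1
      \<and> (\<forall>\<theta>. posterior dens W X Y \<theta> = h (QW W Y X \<theta>) \<theta> * c X Y)"
    and pos: "\<And>X \<theta> \<eta>. full_col_rank X \<Longrightarrow> prior_eta dens W X \<theta> \<eta> > 0"
    and cont: "continuous_on UNIV (\<lambda>(\<eta>, \<theta>). prior_eta dens W X0 \<theta> \<eta>)"
    and indep: "\<And>X \<theta> \<eta>. full_col_rank X \<Longrightarrow> prior_eta dens W X \<theta> \<eta> = prior_eta dens W X0 \<theta> \<eta>"
    and centered: "\<And>\<theta>. has_bochner_integral lborel (\<lambda>\<eta>. prior_eta dens W X0 \<theta> \<eta> *\<^sub>R \<eta>) 0"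
  shows "prior_eta dens W X0 \<theta> \<eta> = prior_eta dens W X0 \<theta> 0 / h 0 \<theta> * h (\<eta> \<bullet> (W *v \<eta>)) \<theta>"
proof -
  have "prior_eta dens W X0 \<theta> \<eta>
      = prior_eta dens W X0 \<theta> 0 / h (0 \<bullet> (W *v 0)) \<theta> * h (\<eta> \<bullet> (W *v \<eta>)) \<theta>"
  proof (rule density_proportional_to_kernel[OF kp, where e = "prior_eta dens W X0"
        and s = "\<lambda>\<theta> \<eta>. h (\<eta> \<bullet> (W *v \<eta>)) \<theta>" and m = "prior_theta dens W"
        and K = "\<lambda>X Y. c X Y * (\<integral>t. dens W X Y t \<partial>lborel)"])
    show "prior_eta dens W X0 \<theta> \<eta> > 0" for \<theta> \<eta> using pos[OF X0] .
    show "continuous_on UNIV (prior_eta dens W X0 \<theta>)" for \<theta>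
      using continuous_on_compose2[OF cont, of UNIV "\<lambda>\<eta>. (\<eta>, \<theta>)"] by (simp add: continuous_intros)
    show "h (\<eta> \<bullet> (W *v \<eta>)) \<theta> \<ge> 0" for \<theta> \<eta> by (rule h_nonneg)
    show "h (- \<eta> \<bullet> (W *v - \<eta>)) \<theta> = h (\<eta> \<bullet> (W *v \<eta>)) \<theta>" for \<theta> \<eta>
      using linear_neg[OF matrix_vector_mul_linear, of W \<eta>] by simp
    show "continuous_on UNIV (\<lambda>\<eta>. h (\<eta> \<bullet> (W *v \<eta>)) \<theta>)" for \<theta>
      by (intro continuous_on_compose2[OF h_cont] continuous_intros) auto
    show "prior_theta dens W X \<theta> \<noteq> 0" if "full_col_rank X" for X \<theta>
      using pos[OF that, of \<theta> 0] by (auto simp: prior_eta_def)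
    show "prior_eta dens W X0 \<theta> (Y - X *v \<theta>) * prior_theta dens W X \<theta>
        = h ((Y - X *v \<theta>) \<bullet> (W *v (Y - X *v \<theta>))) \<theta> * (c X Y * (\<integral>t. dens W X Y t \<partial>lborel))"
      if X: "full_col_rank X" for X \<theta> Y
      using prior_eta_mult_prior_theta_eq_kernel[of dens W X \<theta> Y h "c X Y"] post[OF X] pos[OF X]
      by (simp add: indep[OF X] less_imp_neq[symmetric])
  qed (rule centered)
  then show ?thesis by simp
qed

theorem lemma2:
  fixes \<W> :: "(real^'k::finite^'k) set"
    and dens :: "real^'k^'k \<Rightarrow> real^'p::finite^'k \<Rightarrow> real^'k \<Rightarrow> real^'p \<Rightarrow> real"
  assumes kp: "CARD('p) < CARD('k)"
    and W_spd: "\<forall>W\<in>\<W>. spd W"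
    \<comment> \<open>(MD) absolutely continuous, full support, continuous density of (Y,theta) given (X,W)\<close>
    and MD_dens: "\<forall>W\<in>\<W>. \<forall>X. full_col_rank X \<longrightarrow>
         (\<forall>Y \<theta>. dens W X Y \<theta> \<ge> 0)
       \<and> has_bochner_integral lborel (\<lambda>(Y, \<theta>). dens W X Y \<theta>) 1
       \<and> closure {(Y, \<theta>). dens W X Y \<theta> > 0} = UNIV
       \<and> continuous_on UNIV (\<lambda>(Y, \<theta>). dens W X Y \<theta>)"
    \<comment> \<open>(MD) posterior of the form h(Q_W, W, theta) c(P)\<close>
    and MD_post: "\<exists>(h :: real \<Rightarrow> real^'k^'k \<Rightarrow> real^'p \<Rightarrow> real)
                    (c :: real^'k^'k \<Rightarrow> real^'p^'k \<Rightarrow> real^'k \<Rightarrow> real).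
         (\<forall>q W \<theta>. h q W \<theta> \<ge> 0)
       \<and> (\<forall>W \<theta>. C2_UNIV (\<lambda>q. h q W \<theta>))
       \<and> (\<forall>q W. C1_UNIV (\<lambda>\<theta>. h q W \<theta>))
       \<and> (\<forall>W\<in>\<W>. \<forall>X Y. full_col_rank X \<longrightarrow>
            has_bochner_integral lborel (\<lambda>\<theta>. h (QW W Y X \<theta>) W \<theta> * c W X Y) 1
          \<and> (\<forall>\<theta>. posterior dens W X Y \<theta> = h (QW W Y X \<theta>) W \<theta> * c W X Y))"
    \<comment> \<open>(MZ)(i) strictly positive, C^2 in (eta, theta)\<close>
    and MZ_i: "\<forall>W\<in>\<W>. \<forall>X. full_col_rank X \<longrightarrow>
         (\<forall>\<theta> \<eta>. prior_eta dens W X \<theta> \<eta> > 0)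
       \<and> C2_UNIV (\<lambda>(\<eta>, \<theta>). prior_eta dens W X \<theta> \<eta>)"
    \<comment> \<open>(MZ)(ii) no dependence on X\<close>
    and MZ_ii: "\<forall>W\<in>\<W>. \<forall>X X'. full_col_rank X \<longrightarrow> full_col_rank X' \<longrightarrow>
         (\<forall>\<theta> \<eta>. prior_eta dens W X \<theta> \<eta> = prior_eta dens W X' \<theta> \<eta>)"
    \<comment> \<open>(MZ)(iii) mean zero\<close>
    and MZ_iii: "\<forall>W\<in>\<W>. \<forall>X. full_col_rank X \<longrightarrow> (\<forall>\<theta>.
         has_bochner_integral lborel (\<lambda>\<eta>. prior_eta dens W X \<theta> \<eta> *\<^sub>R \<eta>) 0)"
  shows "\<exists>f :: real \<Rightarrow> real^'p \<Rightarrow> real^'k^'k \<Rightarrow> real.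
           \<forall>W\<in>\<W>. \<forall>X. full_col_rank X \<longrightarrow> (\<forall>\<theta> \<eta>.
             prior_eta dens W X \<theta> \<eta> = f (\<eta> \<bullet> (W *v \<eta>)) \<theta> W)"
proof -
  obtain h :: "real \<Rightarrow> real^'k^'k \<Rightarrow> real^'p \<Rightarrow> real"
    and c :: "real^'k^'k \<Rightarrow> real^'p^'k \<Rightarrow> real^'k \<Rightarrow> real" where
    h_nonneg: "\<And>q W \<theta>. h q W \<theta> \<ge> 0" and h_C2: "\<And>W \<theta>. C2_UNIV (\<lambda>q. h q W \<theta>)" and
    h_post: "\<And>W X Y. W \<in> \<W> \<Longrightarrow> full_col_rank X \<Longrightarrow>
        has_bochner_integral lborel (\<lambda>\<theta>. h (QW W Y X \<theta>) W \<theta> * c W X Y) 1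
      \<and> (\<forall>\<theta>. posterior dens W X Y \<theta> = h (QW W Y X \<theta>) W \<theta> * c W X Y)"
    using MD_post by blast
  obtain X0 :: "real^'p^'k" where X0: "full_col_rank X0"
    using exists_full_col_rank_map[OF less_imp_le[OF kp], of 1 1] by auto
  have "prior_eta dens W X0 \<theta> \<eta> = prior_eta dens W X0 \<theta> 0 / h 0 W \<theta> * h (\<eta> \<bullet> (W *v \<eta>)) W \<theta>"
    if W: "W \<in> \<W>" for W \<theta> \<eta>
  proof (rule prior_eta_proportional_to_kernel[OF less_imp_le[OF kp] X0,
        where h = "\<lambda>q \<theta>. h q W \<theta>" and c = "c W"])
    show "continuous_on UNIV (\<lambda>q. h q W \<theta>)" for \<theta> by (rule C2_UNIV_imp_continuous_on[OF h_C2])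
    show "continuous_on UNIV (\<lambda>(\<eta>, \<theta>). prior_eta dens W X0 \<theta> \<eta>)"
      using MZ_i W X0 C2_UNIV_imp_continuous_on by blast
    show "prior_eta dens W X \<theta> \<eta> = prior_eta dens W X0 \<theta> \<eta>" if "full_col_rank X" for X \<theta> \<eta>
      using MZ_ii W X0 that by blast
  qed (use h_nonneg h_post[OF W] MZ_i MZ_iii W X0 in blast)+
  then show ?thesis
    using MZ_ii X0 by (intro exI[of _ "\<lambda>r \<theta> W. prior_eta dens W X0 \<theta> 0 / h 0 W \<theta> * h r W \<theta>"]) metis
qed

end
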